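(* Let $\Omega\subseteq\mathbb{R}^n$ be open and let $f\in\mathbb{A}(\Omega)$. If $f$ is H-continuous then $f$ is D-continuous, and if $f$ is D-continuous then $f$ is S-continuous.
   Context: $\overline{\mathbb{R}}=\mathbb{R}\cup\{\pm\infty\}$ and $\mathbb{I}\overline{\mathbb{R}}=\{[\underline a,\overline a]:\underline a,\overline a\in\overline{\mathbb{R}},\ \underline a\le\overline a\}$, with $a\in\overline{\mathbb{R}}$ identified with $[a,a]$. $\mathbb{A}(\Omega)$ is the set of all functions $f:\Omega\to\mathbb{I}\overline{\mathbb{R}}$, written $f=[\underline f,\overline f]$. $B_\delta(x)=\{y\in\Omega:\|x-y\|<\delta\}$. For a dense subset $D\subseteq\Omega$ and $f\in\mathbb{A}(D)$ define $I(D,\Omega,f)(x)=\sup_{\delta>0}\inf\{z\in f(y):y\in B_\delta(x)\cap D\}$, $S(D,\Omega,f)(x)=\inf_{\delta>0}\sup\{z\in f(y):y\in B_\delta(x)\cap D\}$, and $F(D,\Omega,f)(x)=[I(D,\Omega,f)(x),S(D,\Omega,f)(x)]$ for $x\in\Omega$; when $D=\Omega$ write $I(f),S(f),F(f)$. A function $f\in\mathbb{A}(\Omega)$ is S-continuous if $F(f)=f$; D-continuous if $F(D,\Omega,f)=f$ for every dense subset $D$ of $\Omega$ (with $f$ restricted to $D$); H-continuous if for every $g\in\mathbb{A}(\Omega)$ with $g(x)\subseteq f(x)$ for all $x\in\Omega$ one has $F(g)(x)=f(x)$ for all $x\in\Omega$. *)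

theory Defs
  imports "HOL-Analysis.Analysis"
begin

text \<open>Extended-real intervals [a,b] are represented as pairs (a,b) with a \<le> b.
  A function in A(Omega) is a function into such pairs; only its values on Omega matter.\<close>

type_synonym eint = "ereal \<times> ereal"

definition ivl :: "eint \<Rightarrow> ereal set" where
  "ivl a = {z. fst a \<le> z \<and> z \<le> snd a}"

definition AF :: "'a set \<Rightarrow> ('a \<Rightarrow> eint) set" where
  "AF \<Omega> = {f. \<forall>x\<in>\<Omega>. fst (f x) \<le> snd (f x)}"

definition Ball_in :: "'a::metric_space set \<Rightarrow> real \<Rightarrow> 'a \<Rightarrow> 'a set" where
  "Ball_in \<Omega> \<delta> x = {y\<in>\<Omega>. dist x y < \<delta>}"

definition dense_in :: "'a::topological_space set \<Rightarrow> 'a set \<Rightarrow> bool" where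
  "dense_in D \<Omega> \<longleftrightarrow> D \<subseteq> \<Omega> \<and> \<Omega> \<subseteq> closure D"

definition Ilow :: "'a::metric_space set \<Rightarrow> 'a set \<Rightarrow> ('a \<Rightarrow> eint) \<Rightarrow> 'a \<Rightarrow> ereal" where
  "Ilow D \<Omega> f x = (SUP \<delta>\<in>{0<..}. Inf {z. \<exists>y\<in>Ball_in \<Omega> \<delta> x \<inter> D. z \<in> ivl (f y)})"

definition Supp :: "'a::metric_space set \<Rightarrow> 'a set \<Rightarrow> ('a \<Rightarrow> eint) \<Rightarrow> 'a \<Rightarrow> ereal" where
  "Supp D \<Omega> f x = (INF \<delta>\<in>{0<..}. Sup {z. \<exists>y\<in>Ball_in \<Omega> \<delta> x \<inter> D. z \<in> ivl (f y)})"

definition Fop :: "'a::metric_space set \<Rightarrow> 'a set \<Rightarrow> ('a \<Rightarrow> eint) \<Rightarrow> 'a \<Rightarrow> eint" where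
  "Fop D \<Omega> f x = (Ilow D \<Omega> f x, Supp D \<Omega> f x)"

definition S_continuous :: "'a::metric_space set \<Rightarrow> ('a \<Rightarrow> eint) \<Rightarrow> bool" where
  "S_continuous \<Omega> f \<longleftrightarrow> (\<forall>x\<in>\<Omega>. Fop \<Omega> \<Omega> f x = f x)"

definition D_continuous :: "'a::metric_space set \<Rightarrow> ('a \<Rightarrow> eint) \<Rightarrow> bool" where
  "D_continuous \<Omega> f \<longleftrightarrow> (\<forall>D. dense_in D \<Omega> \<longrightarrow> (\<forall>x\<in>\<Omega>. Fop D \<Omega> f x = f x))"

definition H_continuous :: "'a::metric_space set \<Rightarrow> ('a \<Rightarrow> eint) \<Rightarrow> bool" where
  "H_continuous \<Omega> f \<longleftrightarrow> (\<forall>g\<in>AF \<Omega>. (\<forall>x\<in>\<Omega>. ivl (g x) \<subseteq> ivl (f x)) \<longrightarrow>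
       (\<forall>x\<in>\<Omega>. Fop \<Omega> \<Omega> g x = f x))"

end

theory Submission
  imports Defs
begin

text \<open>Let \<open>D\<close> be dense and let \<open>g\<close> be the lower endpoint of \<open>f\<close> on \<open>D\<close> and the upper
  endpoint off \<open>D\<close>; H-continuity gives \<open>F(g) = f\<close>. If the infimum of the lower endpoints
  over \<open>D \<inter> B\<^sub>\<delta>(x)\<close> exceeded the lower endpoint of \<open>f(x)\<close>, then \<open>I(g)(x) = f(x)\<close> would
  produce a point \<open>y \<in> B\<^sub>\<delta>(x) - D\<close> whose upper endpoint lies below that infimum; but \<open>y\<close>
  is a limit of points of \<open>D \<inter> B\<^sub>\<delta>(x)\<close>, so \<open>S(g)(y)\<close> is at least the infimum,
  contradicting \<open>S(g)(y) = f(y)\<close>. Upper endpoints follow by the reflection \<open>z \<mapsto> -z\<close>,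
  and \<open>D = \<Omega>\<close> gives D-continuity \<open>\<Longrightarrow>\<close> S-continuity.\<close>

definition eint_uminus :: "eint \<Rightarrow> eint" where
  "eint_uminus a = (- snd a, - fst a)"

lemma eint_uminus_eint_uminus [simp]: "eint_uminus (eint_uminus a) = a"
  by (simp add: eint_uminus_def)

lemma mem_ivl_eint_uminus: "z \<in> ivl (eint_uminus a) \<longleftrightarrow> - z \<in> ivl a"
  using ereal_minus_le_minus[of "- z" "fst a"]
  by (auto simp: ivl_def eint_uminus_def ereal_uminus_le_reorder)

lemma AF_eint_uminus: "f \<in> AF \<Omega> \<Longrightarrow> eint_uminus \<circ> f \<in> AF \<Omega>"
  by (simp add: AF_def eint_uminus_def)

lemma ivl_values_eint_uminus:
  "{z. \<exists>y\<in>A. z \<in> ivl (eint_uminus (f y))} = uminus ` {z. \<exists>y\<in>A. z \<in> ivl (f y)}"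
  by (force simp: mem_ivl_eint_uminus image_iff)

lemma Ilow_eint_uminus: "Ilow D \<Omega> (eint_uminus \<circ> f) x = - Supp D \<Omega> f x"
  by (simp add: Ilow_def Supp_def ivl_values_eint_uminus ereal_Inf_uminus_image_eq ereal_SUP_uminus_eq)

lemma Supp_eint_uminus: "Supp D \<Omega> (eint_uminus \<circ> f) x = - Ilow D \<Omega> f x"
  by (simp add: Ilow_def Supp_def ivl_values_eint_uminus ereal_Sup_uminus_image_eq ereal_INF_uminus_eq)

lemma Fop_eint_uminus: "Fop D \<Omega> (eint_uminus \<circ> f) x = eint_uminus (Fop D \<Omega> f x)"
  by (simp add: Fop_def eint_uminus_def Ilow_eint_uminus Supp_eint_uminus)

lemma H_continuousD:
  "H_continuous \<Omega> f \<Longrightarrow> g \<in> AF \<Omega> \<Longrightarrow> (\<And>y. y \<in> \<Omega> \<Longrightarrow> ivl (g y) \<subseteq> ivl (f y)) \<Longrightarrow> x \<in> \<Omega>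
    \<Longrightarrow> Fop \<Omega> \<Omega> g x = f x"
  by (simp add: H_continuous_def)

lemma H_continuous_eint_uminus:
  assumes "H_continuous \<Omega> f"
  shows "H_continuous \<Omega> (eint_uminus \<circ> f)"
  unfolding H_continuous_def
proof (intro ballI impI)
  fix g x
  assume g: "g \<in> AF \<Omega>" and sub: "\<forall>y\<in>\<Omega>. ivl (g y) \<subseteq> ivl ((eint_uminus \<circ> f) y)" and x: "x \<in> \<Omega>"
  have "ivl ((eint_uminus \<circ> g) y) \<subseteq> ivl (f y)" if "y \<in> \<Omega>" for y
    using sub that by (force simp: mem_ivl_eint_uminus subset_iff)
  then have "Fop \<Omega> \<Omega> (eint_uminus \<circ> g) x = f x"
    by (rule H_continuousD[OF assms AF_eint_uminus[OF g] _ x])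
  then show "Fop \<Omega> \<Omega> g x = (eint_uminus \<circ> f) x"
    using Fop_eint_uminus[of \<Omega> \<Omega> "eint_uminus \<circ> g" x] by (simp add: comp_def)
qed

lemma Inf_ivl_values:
  assumes "\<And>y. y \<in> A \<Longrightarrow> fst (f y) \<le> snd (f y)"
  shows "Inf {z. \<exists>y\<in>A. z \<in> ivl (f y)} = (INF y\<in>A. fst (f y))"
proof (rule antisym)
  show "Inf {z. \<exists>y\<in>A. z \<in> ivl (f y)} \<le> (INF y\<in>A. fst (f y))"
    using assms by (intro INF_greatest Inf_lower) (auto simp: ivl_def)
  show "(INF y\<in>A. fst (f y)) \<le> Inf {z. \<exists>y\<in>A. z \<in> ivl (f y)}"
    by (auto simp: ivl_def intro!: Inf_greatest INF_lower2)
qed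

lemma Sup_ivl_values:
  assumes "\<And>y. y \<in> A \<Longrightarrow> fst (f y) \<le> snd (f y)"
  shows "Sup {z. \<exists>y\<in>A. z \<in> ivl (f y)} = (SUP y\<in>A. snd (f y))"
proof (rule antisym)
  show "Sup {z. \<exists>y\<in>A. z \<in> ivl (f y)} \<le> (SUP y\<in>A. snd (f y))"
    by (auto simp: ivl_def intro!: Sup_least SUP_upper2)
  show "(SUP y\<in>A. snd (f y)) \<le> Sup {z. \<exists>y\<in>A. z \<in> ivl (f y)}"
    using assms by (intro SUP_least Sup_upper) (auto simp: ivl_def)
qed

lemma Ilow_eq_SUP_INF:
  "f \<in> AF \<Omega> \<Longrightarrow> Ilow D \<Omega> f x = (SUP \<delta>\<in>{0<..}. INF y\<in>Ball_in \<Omega> \<delta> x \<inter> D. fst (f y))"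
  unfolding Ilow_def by (subst Inf_ivl_values) (auto simp: AF_def Ball_in_def)

lemma Supp_eq_INF_SUP:
  "f \<in> AF \<Omega> \<Longrightarrow> Supp D \<Omega> f x = (INF \<delta>\<in>{0<..}. SUP y\<in>Ball_in \<Omega> \<delta> x \<inter> D. snd (f y))"
  unfolding Supp_def by (subst Sup_ivl_values) (auto simp: AF_def Ball_in_def)

lemma Ilow_antimono: "D \<subseteq> D' \<Longrightarrow> Ilow D' \<Omega> f x \<le> Ilow D \<Omega> f x"
  unfolding Ilow_def by (intro SUP_mono' Inf_superset_mono) blast

lemma dense_in_meets_Ball_in:
  assumes "dense_in D \<Omega>" and "y \<in> Ball_in \<Omega> \<delta> x" and "e > 0"
  obtains d where "d \<in> D" "d \<in> Ball_in \<Omega> \<delta> x" "d \<in> Ball_in \<Omega> e y"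
proof -
  have y: "y \<in> closure D" "dist x y < \<delta>"
    using assms(1,2) by (auto simp: dense_in_def Ball_in_def)
  then obtain d where "d \<in> D" "dist d y < min e (\<delta> - dist x y)"
    using \<open>e > 0\<close> unfolding closure_approachable by (metis diff_gt_0_iff_gt min_less_iff_conj)
  moreover have "dist x d < \<delta>"
    using calculation dist_triangle[of x d y] by (simp add: dist_commute)
  ultimately show thesis
    using assms(1) that by (auto simp: dense_in_def Ball_in_def dist_commute)
qed

lemma le_Supp_dense:
  assumes h: "h \<in> AF \<Omega>" and D: "dense_in D \<Omega>" and y: "y \<in> Ball_in \<Omega> \<delta> x"
    and bound: "\<And>d. d \<in> Ball_in \<Omega> \<delta> x \<Longrightarrow> d \<in> D \<Longrightarrow> c \<le> snd (h d)"
  shows "c \<le> Supp \<Omega> \<Omega> h y"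
  unfolding Supp_eq_INF_SUP[OF h]
proof (rule INF_greatest)
  fix e :: real
  assume "e \<in> {0<..}"
  then obtain d where d: "d \<in> D" "d \<in> Ball_in \<Omega> \<delta> x" "d \<in> Ball_in \<Omega> e y"
    using dense_in_meets_Ball_in[OF D y] by auto
  then have "c \<le> snd (h d)"
    by (intro bound)
  also have "\<dots> \<le> (SUP y'\<in>Ball_in \<Omega> e y \<inter> \<Omega>. snd (h y'))"
    using d by (intro SUP_upper) (simp add: Ball_in_def)
  finally show "c \<le> (SUP y'\<in>Ball_in \<Omega> e y \<inter> \<Omega>. snd (h y'))" .
qed

lemma H_continuous_Ilow_dense:
  assumes H: "H_continuous \<Omega> f" and f: "f \<in> AF \<Omega>" and D: "dense_in D \<Omega>" and x: "x \<in> \<Omega>"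
  shows "Ilow D \<Omega> f x = fst (f x)"
proof (rule antisym)
  have "fst (f x) = Ilow \<Omega> \<Omega> f x"
    using H_continuousD[OF H f subset_refl x] by (simp add: Fop_def prod_eq_iff)
  also have "\<dots> \<le> Ilow D \<Omega> f x"
    using D by (intro Ilow_antimono) (simp add: dense_in_def)
  finally show "fst (f x) \<le> Ilow D \<Omega> f x" .
next
  define g where "g y = (if y \<in> D then (fst (f y), fst (f y)) else (snd (f y), snd (f y)))" for y
  have "ivl (g y) \<subseteq> ivl (f y)" if "y \<in> \<Omega>" for y
    using f that by (auto simp: AF_def g_def ivl_def)
  moreover have g: "g \<in> AF \<Omega>"
    by (simp add: AF_def g_def)
  ultimately have g_Ilow: "Ilow \<Omega> \<Omega> g y = fst (f y)" and g_Supp: "Supp \<Omega> \<Omega> g y = snd (f y)"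
    if "y \<in> \<Omega>" for y
    using H_continuousD[OF H, of g y] that by (simp_all add: Fop_def prod_eq_iff)
  show "Ilow D \<Omega> f x \<le> fst (f x)"
    unfolding Ilow_eq_SUP_INF[OF f]
  proof (rule SUP_least)
    fix \<delta> :: real
    assume \<delta>: "\<delta> \<in> {0<..}"
    define c where "c = (INF y\<in>Ball_in \<Omega> \<delta> x \<inter> D. fst (f y))"
    have c_le: "c \<le> fst (f d)" if "d \<in> Ball_in \<Omega> \<delta> x" "d \<in> D" for d
      unfolding c_def using that by (intro INF_lower) simp
    show "c \<le> fst (f x)"
    proof (rule ccontr)
      assume "\<not> c \<le> fst (f x)"
      moreover have "(INF y\<in>Ball_in \<Omega> \<delta> x \<inter> \<Omega>. fst (g y)) \<le> Ilow \<Omega> \<Omega> g x"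
        unfolding Ilow_eq_SUP_INF[OF g] using \<delta> by (rule SUP_upper)
      ultimately have "(INF y\<in>Ball_in \<Omega> \<delta> x \<inter> \<Omega>. fst (g y)) < c"
        using g_Ilow[OF x] by simp
      then obtain y where y: "y \<in> Ball_in \<Omega> \<delta> x" "y \<in> \<Omega>" and gy: "fst (g y) < c"
        by (auto simp: INF_less_iff)
      have "y \<notin> D"
        using c_le[OF y(1)] gy by (auto simp: g_def)
      with gy have "snd (f y) < c"
        by (simp add: g_def)
      moreover have "c \<le> Supp \<Omega> \<Omega> g y"
        using c_le by (intro le_Supp_dense[OF g D y(1)]) (simp add: g_def)
      ultimately show False
        using g_Supp[OF y(2)] by simp
    qed
  qed
qed

lemma H_continuous_Supp_dense:
  assumes H: "H_continuous \<Omega> f" and f: "f \<in> AF \<Omega>" and D: "dense_in D \<Omega>" and x: "x \<in> \<Omega>"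
  shows "Supp D \<Omega> f x = snd (f x)"
  using H_continuous_Ilow_dense[OF H_continuous_eint_uminus[OF H] AF_eint_uminus[OF f] D x]
  by (simp add: Ilow_eint_uminus eint_uminus_def ereal_uminus_eq_reorder)

lemma H_continuous_imp_D_continuous:
  "H_continuous \<Omega> f \<Longrightarrow> f \<in> AF \<Omega> \<Longrightarrow> D_continuous \<Omega> f"
  by (simp add: D_continuous_def Fop_def H_continuous_Ilow_dense H_continuous_Supp_dense)

lemma D_continuous_imp_S_continuous: "D_continuous \<Omega> f \<Longrightarrow> S_continuous \<Omega> f"
  by (simp add: D_continuous_def S_continuous_def dense_in_def closure_subset)

theorem theorem1:
  fixes \<Omega> :: "(real ^ 'n) set" and f :: "real ^ 'n \<Rightarrow> eint"
  assumes "open \<Omega>" and "f \<in> AF \<Omega>"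
  shows "(H_continuous \<Omega> f \<longrightarrow> D_continuous \<Omega> f) \<and> (D_continuous \<Omega> f \<longrightarrow> S_continuous \<Omega> f)"
  using assms(2) H_continuous_imp_D_continuous D_continuous_imp_S_continuous by blast

end
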